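(* Let $k\ge 2$ be an integer and let $d_1\ge d_2\ge\cdots\ge d_k\ge 2$ be integers. If $r\le d_1+k-2$, then for all sufficiently large $n$, $$ex\Big(n,K_r,\bigcup_{i=1}^k S_{d_i}\Big)\le \max\left\{\max_{1\le i\le k}\left\{\Big(\binom{d_i+i-1}{r}-\binom{i-1}{r}\Big)\Big\lceil\frac{n-i+1}{d_i}\Big\rceil+\binom{i-1}{r},\ \frac{d_i-1}{r-i+1}(n-i+1)\right\},\ \max_{1\le c<k-1}\left\{\frac{\max\big\{\binom{d_c+c}{r-1},\,d_c+c\big\}}{r-c}(n-c)\right\}\right\}.$$
   Context: $S_\ell$ denotes the star $K_{1,\ell}$ with $\ell$ edges, and $\bigcup_{i=1}^k S_{d_i}$ denotes the star forest that is the vertex-disjoint union of $S_{d_1},\dots,S_{d_k}$. For graphs $H$ and $F$, the generalized Turán number $ex(n,H,F)$ is the maximum number of copies of $H$ in an $n$-vertex graph containing no copy of $F$ as a subgraph; $K_r$ is the complete graph on $r$ vertices. Binomial coefficients $\binom{a}{b}$ with $a<b$ are $0$. *)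

theory Defs
  imports Complex_Main
begin

definition simple_graph :: "'a set \<Rightarrow> 'a set set \<Rightarrow> bool" where
  "simple_graph V E \<longleftrightarrow> (\<forall>e\<in>E. e \<subseteq> V \<and> card e = 2)"

definition subgraph_copy :: "'b set \<Rightarrow> 'b set set \<Rightarrow> 'a set \<Rightarrow> 'a set set \<Rightarrow> bool" where
  "subgraph_copy VH EH VG EG \<longleftrightarrow>
     (\<exists>f. inj_on f VH \<and> f ` VH \<subseteq> VG \<and> (\<forall>e\<in>EH. f ` e \<in> EG))"

definition count_Kr :: "nat \<Rightarrow> 'a set \<Rightarrow> 'a set set \<Rightarrow> nat" where
  "count_Kr r V E = card {S. S \<subseteq> V \<and> card S = r \<and> (\<forall>x\<in>S. \<forall>y\<in>S. x \<noteq> y \<longrightarrow> {x, y} \<in> E)}"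

(* star forest S_{d 1} \<union> ... \<union> S_{d k}: star i has centre (i,0) and leaves (i,j), 1 \<le> j \<le> d i *)
definition star_forest_V :: "nat \<Rightarrow> (nat \<Rightarrow> nat) \<Rightarrow> (nat \<times> nat) set" where
  "star_forest_V k d = {(i, j). 1 \<le> i \<and> i \<le> k \<and> j \<le> d i}"

definition star_forest_E :: "nat \<Rightarrow> (nat \<Rightarrow> nat) \<Rightarrow> (nat \<times> nat) set set" where
  "star_forest_E k d = {{(i, 0), (i, j)} | i j. 1 \<le> i \<and> i \<le> k \<and> 1 \<le> j \<and> j \<le> d i}"

definition ex_Kr :: "nat \<Rightarrow> nat \<Rightarrow> 'b set \<Rightarrow> 'b set set \<Rightarrow> nat" where
  "ex_Kr n r VF EF = Max {count_Kr r {0..<n} E | E.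
      simple_graph {0..<n::nat} E \<and> \<not> subgraph_copy VF EF {0..<n} E}"

definition cor62_bound :: "nat \<Rightarrow> (nat \<Rightarrow> nat) \<Rightarrow> nat \<Rightarrow> nat \<Rightarrow> real" where
  "cor62_bound k d r n = Max (
     (\<lambda>i. (real ((d i + i - 1) choose r) - real ((i - 1) choose r))
            * of_int \<lceil>(real n - real i + 1) / real (d i)\<rceil> + real ((i - 1) choose r)) ` {1..k}
     \<union> (\<lambda>i. (real (d i) - 1) / (real r - real i + 1) * (real n - real i + 1)) ` {1..k}
     \<union> (\<lambda>c. real (max ((d c + c) choose (r - 1)) (d c + c)) / (real r - real c) * (real n - real c))
            ` {1..<k - 1})"

end

theory Submission
  imports Defs "HOL-Library.Disjoint_Sets"
begin

text \<open>
  Let T be the number of vertices of the star forest F, and B the set of vertices of degree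
  at least T in an F-free graph on n vertices.  A vertex of degree at least T can always be
  made the centre of a star avoiding everything used so far, so s = card B < k, and the stars
  with indices s + 1, s + 2, ... cannot all be packed greedily outside B.  If j is the first
  index at which this fails and U is the vertex set of the successful partial packing, then
  every vertex of W = V - B - U has fewer than d j neighbours in W.  Sorting the r-cliques by
  the number t of their vertices in W, double counting over W and Vandermonde's identity
  bound their number by C(s, r) + card U * C(T, r - 1) + card W * (C(d j + s, r) - C(s, r)) / d j.
  For j = s + 1 this is the j-th term of the bound; otherwise C(d j + m, r) - C(m, r) grows
  strictly from m = s to m = j - 1, which absorbs the constant terms once n is large.
\<close>

section \<open>Star packings\<close>

definition neighbours :: "'a set set \<Rightarrow> 'a \<Rightarrow> 'a set" where
  "neighbours E v = {u. {v, u} \<in> E}"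

lemma neighbours_subset: "simple_graph V E \<Longrightarrow> neighbours E v \<subseteq> V - {v}"
  unfolding simple_graph_def neighbours_def by (auto simp: card_2_iff)

definition star_packing ::
    "'a set \<Rightarrow> 'a set set \<Rightarrow> (nat \<Rightarrow> nat) \<Rightarrow> nat set \<Rightarrow> (nat \<Rightarrow> 'a) \<Rightarrow> (nat \<Rightarrow> 'a set) \<Rightarrow> bool" where
  "star_packing V E d I c L \<longleftrightarrow>
     (\<forall>i\<in>I. c i \<in> V \<and> L i \<subseteq> neighbours E (c i) \<and> finite (L i) \<and> card (L i) = d i) \<and>
     disjoint_family_on (\<lambda>i. insert (c i) (L i)) I"

definition packed_vertices :: "nat set \<Rightarrow> (nat \<Rightarrow> 'a) \<Rightarrow> (nat \<Rightarrow> 'a set) \<Rightarrow> 'a set" where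
  "packed_vertices I c L = (\<Union>i\<in>I. insert (c i) (L i))"

lemma star_packing_empty: "star_packing V E d {} c L"
  unfolding star_packing_def disjoint_family_on_def by simp

lemma packed_vertices_empty [simp]: "packed_vertices {} c L = {}"
  unfolding packed_vertices_def by simp

lemma packed_vertices_subset:
  "simple_graph V E \<Longrightarrow> star_packing V E d I c L \<Longrightarrow> packed_vertices I c L \<subseteq> V"
  unfolding star_packing_def packed_vertices_def using neighbours_subset by fastforce

lemma card_packed_vertices_le:
  assumes "finite I" "star_packing V E d I c L"
  shows "card (packed_vertices I c L) \<le> (\<Sum>i\<in>I. d i + 1)"
proof -
  have "card (packed_vertices I c L) \<le> (\<Sum>i\<in>I. card (insert (c i) (L i)))"
    unfolding packed_vertices_def using assms(1) by (rule card_UN_le)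
  also have "\<dots> \<le> (\<Sum>i\<in>I. d i + 1)"
    using assms(2) by (intro sum_mono) (auto simp: star_packing_def card_insert_if)
  finally show ?thesis .
qed

lemma star_packing_insert:
  assumes P: "star_packing V E d I c L" and "a \<notin> I" "v \<in> V" "La \<subseteq> neighbours E v" "finite La"
    "card La = d a" "insert v La \<inter> packed_vertices I c L = {}"
  shows "star_packing V E d (insert a I) (c(a := v)) (L(a := La))"
    and "packed_vertices (insert a I) (c(a := v)) (L(a := La)) = insert v La \<union> packed_vertices I c L"
proof -
  let ?F = "\<lambda>i. insert ((c(a := v)) i) ((L(a := La)) i)"
  have old: "(\<Union>i\<in>I. ?F i) = packed_vertices I c L"
    using assms(2) unfolding packed_vertices_def by (intro SUP_cong) auto
  have "disjoint_family_on ?F I"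
    by (rule disjoint_family_on_bisimulation[of "\<lambda>i. insert (c i) (L i)"])
      (use P assms(2) in \<open>auto simp: star_packing_def\<close>)
  then have "disjoint_family_on ?F (insert a I)"
    using assms(2,7) old by (simp add: disjoint_family_on_insert)
  then show "star_packing V E d (insert a I) (c(a := v)) (L(a := La))"
    using P assms(2-6) unfolding star_packing_def by auto
  show "packed_vertices (insert a I) (c(a := v)) (L(a := La)) = insert v La \<union> packed_vertices I c L"
    using old unfolding packed_vertices_def by simp
qed

lemma star_bij_betw:
  assumes "finite L" "card L = m" "c \<notin> L"
  obtains h where "bij_betw h {0..m} (insert c L)" "h 0 = c"
proof -
  obtain h' where h': "bij_betw h' {1..m} L"
    using ex_bij_betw_nat_finite_1[OF assms(1)] assms(2) by auto
  define h where "h j = (if j = 0 then c else h' j)" for j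
  have "h 0 = c" "0 \<notin> {1..m}" "h 0 \<notin> L"
    using assms(3) by (simp_all add: h_def)
  have "bij_betw h {1..m} L"
    using h' bij_betw_cong[of "{1..m}" h h' L] by (simp add: h_def)
  then have "bij_betw h ({1..m} \<union> {0}) (L \<union> {h 0})"
    using notIn_Un_bij_betw3[of 0 "{1..m}" h L] \<open>0 \<notin> {1..m}\<close> \<open>h 0 \<notin> L\<close> by simp
  moreover have "{1..m} \<union> {0} = {0..m}" "L \<union> {h 0} = insert c L"
    using \<open>h 0 = c\<close> by auto
  ultimately show ?thesis
    using that \<open>h 0 = c\<close> by simp
qed

lemma star_packing_subgraph_copy:
  assumes G: "simple_graph V E" and P: "star_packing V E d {1..k} c L"
  shows "subgraph_copy (star_forest_V k d) (star_forest_E k d) V E"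
proof -
  have centre: "c i \<in> V" and leaves: "L i \<subseteq> V - {c i}" and nbrs: "L i \<subseteq> neighbours E (c i)"
    and "finite (L i)" "card (L i) = d i"
    if "i \<in> {1..k}" for i
    using P that neighbours_subset[OF G] unfolding star_packing_def by blast+
  then have "\<forall>i\<in>{1..k}. \<exists>h. bij_betw h {0..d i} (insert (c i) (L i)) \<and> h 0 = c i"
    by (metis Diff_iff insertI1 star_bij_betw subsetD)
  then obtain h where h: "\<And>i. i \<in> {1..k} \<Longrightarrow> bij_betw (h i) {0..d i} (insert (c i) (L i)) \<and> h i 0 = c i"
    by metis
  define f where "f = (\<lambda>(i, j). h i j)"
  have mem: "f (i, j) \<in> insert (c i) (L i)" if "i \<in> {1..k}" "j \<in> {0..d i}" for i j
    using bij_betwE[OF conjunct1[OF h[OF that(1)]]] that(2) unfolding f_def by simp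
  have disj: "disjoint_family_on (\<lambda>i. insert (c i) (L i)) {1..k}"
    using P unfolding star_packing_def by blast
  have "inj_on f (star_forest_V k d)"
  proof (rule inj_onI, clarify)
    fix i j i' j' assume "(i, j) \<in> star_forest_V k d" "(i', j') \<in> star_forest_V k d"
      and eq: "f (i, j) = f (i', j')"
    then have ij: "i \<in> {1..k}" "j \<in> {0..d i}" and ij': "i' \<in> {1..k}" "j' \<in> {0..d i'}"
      unfolding star_forest_V_def by auto
    have "i = i'"
    proof (rule ccontr)
      assume "i \<noteq> i'"
      then have "insert (c i) (L i) \<inter> insert (c i') (L i') = {}"
        by (rule disjoint_family_onD[OF disj ij(1) ij'(1)])
      then show False
        using mem[OF ij] mem[OF ij'] eq by auto
    qed
    moreover have "inj_on (h i) {0..d i}"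
      using h[OF ij(1)] by (simp add: bij_betw_def)
    ultimately show "i = i' \<and> j = j'"
      using inj_onD[of "h i" "{0..d i}" j j'] eq ij ij' by (simp add: f_def)
  qed
  moreover have "f ` star_forest_V k d \<subseteq> V"
  proof clarify
    fix i j assume "(i, j) \<in> star_forest_V k d"
    then have i: "i \<in> {1..k}" and "j \<in> {0..d i}"
      unfolding star_forest_V_def by auto
    then have "f (i, j) \<in> insert (c i) (L i)"
      by (rule mem)
    then show "f (i, j) \<in> V"
      using centre[OF i] leaves[OF i] by auto
  qed
  moreover have "f ` e \<in> E" if e: "e \<in> star_forest_E k d" for e
  proof -
    obtain i j where e: "e = {(i, 0), (i, j)}" "i \<in> {1..k}" "j \<in> {1..d i}"
      using e unfolding star_forest_E_def by auto
    have "inj_on (h i) {0..d i}"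
      using h[OF e(2)] by (simp add: bij_betw_def)
    then have "h i j \<noteq> h i 0"
      using inj_onD[of "h i" "{0..d i}" j 0] e(3) by auto
    moreover have "h i j \<in> insert (c i) (L i)"
      using bij_betwE[OF conjunct1[OF h[OF e(2)]]] e(3) by simp
    ultimately have "h i j \<in> neighbours E (c i)"
      using h[OF e(2)] nbrs[OF e(2)] by auto
    moreover have "f ` e = {c i, h i j}"
      using e h[OF e(2)] by (simp add: f_def)
    ultimately show ?thesis
      unfolding neighbours_def by simp
  qed
  ultimately show ?thesis
    unfolding subgraph_copy_def by blast
qed

lemma star_packing_add_star:
  assumes P: "star_packing V E d I c L" and "a \<notin> I" "v \<in> V" "finite Y"
    "v \<notin> packed_vertices I c L" "packed_vertices I c L \<subseteq> Y" "card Y + d a \<le> card (neighbours E v)"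
  obtains La where "La \<subseteq> neighbours E v - Y" "card La = d a"
    "star_packing V E d (insert a I) (c(a := v)) (L(a := La))"
    "packed_vertices (insert a I) (c(a := v)) (L(a := La)) = insert v La \<union> packed_vertices I c L"
proof -
  have "card (neighbours E v) - card Y \<le> card (neighbours E v - Y)"
    using assms(4) by (rule diff_card_le_card_Diff)
  then have "d a \<le> card (neighbours E v - Y)"
    using assms(7) by linarith
  then obtain La where La: "La \<subseteq> neighbours E v - Y" "card La = d a" "finite La"
    by (meson obtain_subset_with_card_n)
  moreover have "La \<subseteq> neighbours E v" "insert v La \<inter> packed_vertices I c L = {}"
    using La assms(5,6) by auto
  ultimately show ?thesis
    using that star_packing_insert[OF P assms(2,3) _ La(3,2)] by blast
qed

lemma star_packing_extend:
  assumes G: "simple_graph V E" "finite V"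
    and "finite A" "A \<inter> I = {}" "star_packing V E d I c L" "inj_on g A" "g ` A \<subseteq> X" "X \<subseteq> V"
    "packed_vertices I c L \<inter> X = {}"
    "\<And>a. a \<in> A \<Longrightarrow> card (packed_vertices I c L) + sum d A + card X \<le> card (neighbours E (g a))"
  shows "\<exists>c' L'. star_packing V E d (I \<union> A) c' L' \<and> packed_vertices (I \<union> A) c' L' \<inter> X \<subseteq> g ` A
      \<and> card (packed_vertices (I \<union> A) c' L' \<union> X) \<le> card (packed_vertices I c L) + sum d A + card X"
  using assms(3-)
proof (induction A rule: finite_induct)
  case empty
  then show ?case
    using card_Un_le[of "packed_vertices I c L" X] by (intro exI[of _ c] exI[of _ L]) simp
next
  case (insert a A)
  have "A \<inter> I = {}" "inj_on g A" "g ` A \<subseteq> X"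
    using insert.prems(1,3,4) by auto
  moreover have "card (packed_vertices I c L) + sum d A + card X \<le> card (neighbours E (g b))" if "b \<in> A" for b
    using insert.prems(7)[of b] that insert.hyps by simp
  ultimately obtain c' L' where P': "star_packing V E d (I \<union> A) c' L'"
    and X': "packed_vertices (I \<union> A) c' L' \<inter> X \<subseteq> g ` A"
    and C': "card (packed_vertices (I \<union> A) c' L' \<union> X) \<le> card (packed_vertices I c L) + sum d A + card X"
    using insert.IH insert.prems(2,5,6) by blast
  let ?U = "packed_vertices (I \<union> A) c' L'"
  have "?U \<union> X \<subseteq> V"
    using packed_vertices_subset[OF G(1) P'] insert.prems(5) by blast
  then have "finite (?U \<union> X)"
    using G(2) by (rule finite_subset)
  moreover have ga: "g a \<in> X" "g a \<notin> ?U"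
    using insert.prems(3,4) insert.hyps(2) X' by auto
  moreover have "sum d (insert a A) = d a + sum d A"
    using insert.hyps by simp
  then have "card (?U \<union> X) + d a \<le> card (neighbours E (g a))"
    using C' insert.prems(7)[OF insertI1] by linarith
  moreover have "a \<notin> I \<union> A" "g a \<in> V"
    using insert.prems(1,5) insert.hyps(2) ga(1) by auto
  ultimately obtain La where La: "La \<subseteq> neighbours E (g a) - (?U \<union> X)" "card La = d a"
    and new: "star_packing V E d (insert a (I \<union> A)) (c'(a := g a)) (L'(a := La))"
      "packed_vertices (insert a (I \<union> A)) (c'(a := g a)) (L'(a := La)) = insert (g a) La \<union> ?U"
    using star_packing_add_star[OF P', of a "g a" "?U \<union> X"] by blast
  have IA: "I \<union> insert a A = insert a (I \<union> A)" by auto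
  show ?case
  proof (intro exI conjI)
    show "star_packing V E d (I \<union> insert a A) (c'(a := g a)) (L'(a := La))"
      unfolding IA by (rule new(1))
    show "packed_vertices (I \<union> insert a A) (c'(a := g a)) (L'(a := La)) \<inter> X \<subseteq> g ` insert a A"
      unfolding IA new(2) using X' La by auto
    have "insert (g a) La \<union> ?U \<union> X = La \<union> (?U \<union> X)"
      using ga by auto
    then have "card (packed_vertices (I \<union> insert a A) (c'(a := g a)) (L'(a := La)) \<union> X) \<le> card La + card (?U \<union> X)"
      unfolding IA new(2) by (metis card_Un_le)
    then show "card (packed_vertices (I \<union> insert a A) (c'(a := g a)) (L'(a := La)) \<union> X)
        \<le> card (packed_vertices I c L) + sum d (insert a A) + card X"
      using La(2) C' insert.hyps by simp
  qed
qed

lemma high_degree_vertices_complete_packing: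
  assumes G: "simple_graph V E" "finite V" and "B \<subseteq> V" "card B \<le> k"
    and P: "star_packing V E d {card B + 1..k} c L" "packed_vertices {card B + 1..k} c L \<inter> B = {}"
    and deg: "\<And>b. b \<in> B \<Longrightarrow> (\<Sum>i\<in>{1..k}. d i + 1) \<le> card (neighbours E b)"
  shows "subgraph_copy (star_forest_V k d) (star_forest_E k d) V E"
proof -
  let ?s = "card B"
  have "finite B"
    using assms(3) G(2) by (rule finite_subset)
  then obtain g where g: "bij_betw g {1..?s} B"
    using ex_bij_betw_nat_finite_1 by blast
  have packed: "card (packed_vertices {?s + 1..k} c L) \<le> (\<Sum>i\<in>{?s + 1..k}. d i + 1)"
    using P(1) by (intro card_packed_vertices_le) auto
  have "{1..k} = {1..?s} \<union> {?s + 1..k}"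
    using assms(4) by auto
  then have split: "(\<Sum>i\<in>{1..k}. d i + 1) = (\<Sum>i\<in>{1..?s}. d i + 1) + (\<Sum>i\<in>{?s + 1..k}. d i + 1)"
    by (simp add: sum.union_disjoint)
  have centres: "(\<Sum>i\<in>{1..?s}. d i + 1) = sum d {1..?s} + ?s"
    unfolding sum.distrib by simp
  have degree: "card (packed_vertices {?s + 1..k} c L) + sum d {1..?s} + card B \<le> card (neighbours E (g b))"
    if "b \<in> {1..?s}" for b
  proof -
    have "g b \<in> B"
      using g that bij_betwE by blast
    then show ?thesis
      using deg[OF \<open>g b \<in> B\<close>] packed split centres by linarith
  qed
  have "inj_on g {1..?s}" "g ` {1..?s} \<subseteq> B" "{1..?s} \<inter> {?s + 1..k} = {}"
    using g by (auto simp: bij_betw_def)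
  from star_packing_extend[OF G finite_atLeastAtMost this(3) P(1) this(1,2) assms(3) P(2) degree]
  obtain c' L' where "star_packing V E d ({?s + 1..k} \<union> {1..?s}) c' L'"
    by blast
  moreover have "{?s + 1..k} \<union> {1..?s} = {1..k}"
    using assms(4) by auto
  ultimately have "star_packing V E d {1..k} c' L'"
    by simp
  then show ?thesis
    by (rule star_packing_subgraph_copy[OF G(1)])
qed

lemma star_packing_maximal_sparse:
  assumes P: "star_packing V E d I c L" "packed_vertices I c L \<inter> B = {}" "a \<notin> I"
    and maximal: "\<And>c' L'. star_packing V E d (insert a I) c' L' \<Longrightarrow> packed_vertices (insert a I) c' L' \<inter> B \<noteq> {}"
    and v: "v \<in> V - B - packed_vertices I c L"
  shows "card (neighbours E v \<inter> (V - B - packed_vertices I c L)) < d a"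
proof (rule ccontr)
  assume "\<not> ?thesis"
  then obtain La where La: "La \<subseteq> neighbours E v \<inter> (V - B - packed_vertices I c L)" "card La = d a" "finite La"
    by (meson not_less obtain_subset_with_card_n)
  have "v \<in> V" "La \<subseteq> neighbours E v" "insert v La \<inter> packed_vertices I c L = {}"
    using La v by auto
  note new = star_packing_insert[OF P(1,3) this(1,2) La(3,2) this(3)]
  have "packed_vertices (insert a I) (c(a := v)) (L(a := La)) \<inter> B = {}"
    unfolding new(2) using P(2) La v by auto
  with maximal[OF new(1)] show False ..
qed

lemma card_high_degree_vertices_lt:
  assumes G: "simple_graph V E" "finite V"
    and free: "\<not> subgraph_copy (star_forest_V k d) (star_forest_E k d) V E"
  shows "card {v\<in>V. (\<Sum>i\<in>{1..k}. d i + 1) \<le> card (neighbours E v)} < k"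
proof (rule ccontr)
  assume "\<not> ?thesis"
  then obtain B where B: "B \<subseteq> {v\<in>V. (\<Sum>i\<in>{1..k}. d i + 1) \<le> card (neighbours E v)}" "card B = k"
    by (meson not_less obtain_subset_with_card_n)
  have "star_packing V E d {card B + 1..k} c L" "packed_vertices {card B + 1..k} c L \<inter> B = {}"
    for c L
    using B(2) star_packing_empty by simp_all
  moreover have "B \<subseteq> V" "card B \<le> k" "\<And>b. b \<in> B \<Longrightarrow> (\<Sum>i\<in>{1..k}. d i + 1) \<le> card (neighbours E b)"
    using B by auto
  ultimately show False
    using high_degree_vertices_complete_packing[OF G] free by metis
qed

lemma nat_first_failure:
  fixes P :: "nat \<Rightarrow> bool"
  assumes "P s" "\<not> P k" "s \<le> k"
  obtains j where "s < j" "j \<le> k" "P (j - 1)" "\<not> P j"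
proof -
  define j where "j = (LEAST m. s \<le> m \<and> \<not> P m)"
  have ex: "s \<le> k \<and> \<not> P k"
    using assms(2,3) by simp
  have j: "s \<le> j" "\<not> P j"
    using LeastI[of "\<lambda>m. s \<le> m \<and> \<not> P m", OF ex] unfolding j_def by auto
  have "j \<le> k"
    unfolding j_def by (rule Least_le[of "\<lambda>m. s \<le> m \<and> \<not> P m", OF ex])
  have "s < j"
    using j assms(1) by (cases "s = j") auto
  have "\<not> (s \<le> j - 1 \<and> \<not> P (j - 1))"
    using \<open>s < j\<close> unfolding j_def by (intro not_less_Least) simp
  then show ?thesis
    using that \<open>s < j\<close> \<open>j \<le> k\<close> j(2) by simp
qed

lemma star_forest_free_decomposition:
  assumes G: "simple_graph V E" "finite V"
    and free: "\<not> subgraph_copy (star_forest_V k d) (star_forest_E k d) V E"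
  defines "T \<equiv> \<Sum>i\<in>{1..k}. d i + 1"
  obtains B j U where "B \<subseteq> V" "card B < j" "j \<le> k" "\<forall>v\<in>V - B. card (neighbours E v) < T"
    "U \<subseteq> V - B" "card U \<le> T" "j = card B + 1 \<Longrightarrow> U = {}"
    "\<forall>v\<in>V - B - U. card (neighbours E v \<inter> (V - B - U)) < d j"
proof -
  define B where "B = {v\<in>V. T \<le> card (neighbours E v)}"
  have BV: "B \<subseteq> V" and low: "\<forall>v\<in>V - B. card (neighbours E v) < T"
    and high: "\<And>b. b \<in> B \<Longrightarrow> (\<Sum>i\<in>{1..k}. d i + 1) \<le> card (neighbours E b)"
    unfolding B_def T_def by auto
  have "card B < k"
    using card_high_degree_vertices_lt[OF G free] unfolding B_def T_def .
  define s where "s = card B"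
  define P where "P m \<longleftrightarrow> (\<exists>c L. star_packing V E d {s + 1..m} c L \<and> packed_vertices {s + 1..m} c L \<inter> B = {})"
    for m
  have "P s"
    unfolding P_def by (simp add: star_packing_empty)
  have "\<not> P k"
  proof
    assume "P k"
    then obtain c L where "star_packing V E d {card B + 1..k} c L" "packed_vertices {card B + 1..k} c L \<inter> B = {}"
      unfolding P_def s_def by blast
    with high_degree_vertices_complete_packing[OF G BV _ this high] \<open>card B < k\<close> free show False
      by simp
  qed
  obtain j where "s < j" "j \<le> k" "P (j - 1)" "\<not> P j"
    using nat_first_failure[of P s k] \<open>P s\<close> \<open>\<not> P k\<close> \<open>card B < k\<close> unfolding s_def by auto
  then obtain c L where P0: "star_packing V E d {s + 1..j - 1} c L"
    and P0B: "packed_vertices {s + 1..j - 1} c L \<inter> B = {}"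
    unfolding P_def by auto
  define U where "U = packed_vertices {s + 1..j - 1} c L"
  have "U \<subseteq> V - B"
    using packed_vertices_subset[OF G(1) P0] P0B unfolding U_def by auto
  have "card U \<le> (\<Sum>i\<in>{s + 1..j - 1}. d i + 1)"
    unfolding U_def using P0 by (intro card_packed_vertices_le) auto
  also have "\<dots> \<le> T"
    unfolding T_def using \<open>j \<le> k\<close> by (intro sum_mono2) auto
  finally have "card U \<le> T" .
  have "j = card B + 1 \<Longrightarrow> U = {}"
    unfolding U_def packed_vertices_def s_def by simp
  have step: "insert j {s + 1..j - 1} = {s + 1..j}"
    using \<open>s < j\<close> by auto
  have maximal: "packed_vertices (insert j {s + 1..j - 1}) c' L' \<inter> B \<noteq> {}"
    if "star_packing V E d (insert j {s + 1..j - 1}) c' L'" for c' L'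
  proof
    assume "packed_vertices (insert j {s + 1..j - 1}) c' L' \<inter> B = {}"
    with that have "P j"
      unfolding P_def step by blast
    with \<open>\<not> P j\<close> show False
      by simp
  qed
  have "j \<notin> {s + 1..j - 1}"
    using \<open>s < j\<close> by simp
  from star_packing_maximal_sparse[OF P0 P0B this maximal]
  have "\<forall>v\<in>V - B - U. card (neighbours E v \<inter> (V - B - U)) < d j"
    unfolding U_def by blast
  from that[OF BV _ \<open>j \<le> k\<close> low \<open>U \<subseteq> V - B\<close> \<open>card U \<le> T\<close> \<open>j = card B + 1 \<Longrightarrow> U = {}\<close> this]
  show ?thesis
    using \<open>s < j\<close> unfolding s_def .
qed

section \<open>Counting cliques\<close>

definition clique :: "'a set set \<Rightarrow> 'a set \<Rightarrow> bool" where
  "clique E S \<longleftrightarrow> (\<forall>x\<in>S. \<forall>y\<in>S. x \<noteq> y \<longrightarrow> {x, y} \<in> E)"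

lemma count_Kr_eq_card_cliques: "count_Kr r V E = card {S. S \<subseteq> V \<and> card S = r \<and> clique E S}"
  unfolding count_Kr_def clique_def by simp

lemma count_Kr_le_choose: "finite V \<Longrightarrow> count_Kr r V E \<le> card V choose r"
  unfolding count_Kr_def n_subsets[symmetric] by (intro card_mono) auto

lemma card_cliques_through_vertex_le:
  assumes "finite B" "finite W" "B \<inter> W = {}" "v \<in> W"
  shows "card {S. S \<subseteq> B \<union> W \<and> card S = r \<and> clique E S \<and> card (S \<inter> W) = t \<and> v \<in> S}
    \<le> (card B choose (r - t)) * (card (neighbours E v \<inter> W) choose (t - 1))"
proof -
  let ?C = "{S. S \<subseteq> B \<union> W \<and> card S = r \<and> clique E S \<and> card (S \<inter> W) = t \<and> v \<in> S}"
  let ?P = "{A. A \<subseteq> B \<and> card A = r - t}"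
  let ?Q = "{A. A \<subseteq> neighbours E v \<inter> W \<and> card A = t - 1}"
  have "S = (S \<inter> B) \<union> insert v (S \<inter> W - {v})" if "S \<in> ?C" for S
    using that assms(4) by blast
  then have "inj_on (\<lambda>S. (S \<inter> B, S \<inter> W - {v})) ?C"
    by (intro inj_onI) (metis (no_types, lifting) prod.inject)
  moreover have "(\<lambda>S. (S \<inter> B, S \<inter> W - {v})) ` ?C \<subseteq> ?P \<times> ?Q"
  proof (rule image_subsetI)
    fix S assume "S \<in> ?C"
    then have S: "S \<subseteq> B \<union> W" "card S = r" "clique E S" "card (S \<inter> W) = t" "v \<in> S"
      by auto
    have "finite S"
      using S(1) assms(1,2) finite_subset by blast
    have "S = (S \<inter> B) \<union> (S \<inter> W)" "(S \<inter> B) \<inter> (S \<inter> W) = {}"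
      using S(1) assms(3) by blast+
    then have "card S = card (S \<inter> B) + card (S \<inter> W)"
      using \<open>finite S\<close> by (metis card_Un_disjoint finite_Int)
    then have "card (S \<inter> B) = r - t"
      using S(2,4) by simp
    moreover have "card (S \<inter> W - {v}) = t - 1"
      using S(4,5) assms(4) by simp
    moreover have "S \<inter> W - {v} \<subseteq> neighbours E v \<inter> W"
      using S(3,5) unfolding clique_def neighbours_def by auto
    ultimately show "(S \<inter> B, S \<inter> W - {v}) \<in> ?P \<times> ?Q"
      by simp
  qed
  moreover have "finite (?P \<times> ?Q)"
    using assms(1,2) by simp
  ultimately have "card ?C \<le> card (?P \<times> ?Q)"
    by (rule card_inj_on_le)
  also have "\<dots> = card ?P * card ?Q"
    by (rule card_cartesian_product)
  also have "\<dots> = (card B choose (r - t)) * (card (neighbours E v \<inter> W) choose (t - 1))"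
    using n_subsets[OF assms(1)] n_subsets[of "neighbours E v \<inter> W"] assms(2) by simp
  finally show ?thesis .
qed

lemma card_cliques_meeting_le:
  assumes "finite V" "U \<subseteq> V" "\<And>z. z \<in> U \<Longrightarrow> card (neighbours E z \<inter> V) \<le> D"
  shows "card {S. S \<subseteq> V \<and> card S = r \<and> clique E S \<and> S \<inter> U \<noteq> {}} \<le> card U * (D choose (r - 1))"
proof -
  have "{S. S \<subseteq> V \<and> card S = r \<and> clique E S \<and> S \<inter> U \<noteq> {}}
      = (\<Union>z\<in>U. {S. S \<subseteq> {} \<union> V \<and> card S = r \<and> clique E S \<and> card (S \<inter> V) = r \<and> z \<in> S})"
    by (auto simp: Int_absorb2)
  also have "card \<dots> \<le> (\<Sum>z\<in>U. card {S. S \<subseteq> {} \<union> V \<and> card S = r \<and> clique E S \<and> card (S \<inter> V) = r \<and> z \<in> S})"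
    using assms(1,2) finite_subset by (intro card_UN_le) blast
  also have "\<dots> \<le> (\<Sum>z\<in>U. D choose (r - 1))"
  proof (rule sum_mono)
    fix z assume "z \<in> U"
    then have "z \<in> V"
      using assms(2) by blast
    have "card {S. S \<subseteq> {} \<union> V \<and> card S = r \<and> clique E S \<and> card (S \<inter> V) = r \<and> z \<in> S}
        \<le> card (neighbours E z \<inter> V) choose (r - 1)"
      using card_cliques_through_vertex_le[of "{}" V z r E r] assms(1) \<open>z \<in> V\<close> by simp
    also have "\<dots> \<le> D choose (r - 1)"
      using assms(3)[OF \<open>z \<in> U\<close>] by (simp add: binomial_right_mono)
    finally show "card {S. S \<subseteq> {} \<union> V \<and> card S = r \<and> clique E S \<and> card (S \<inter> V) = r \<and> z \<in> S}
        \<le> D choose (r - 1)" .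
  qed
  finally show ?thesis
    by simp
qed

lemma card_cliques_by_intersection_le:
  assumes "finite B" "finite W" "B \<inter> W = {}" "\<And>v. v \<in> W \<Longrightarrow> card (neighbours E v \<inter> W) < \<Delta>" "1 \<le> t"
  shows "\<Delta> * card {S. S \<subseteq> B \<union> W \<and> card S = r \<and> clique E S \<and> card (S \<inter> W) = t}
    \<le> card W * (card B choose (r - t)) * (\<Delta> choose t)"
proof -
  let ?C = "{S. S \<subseteq> B \<union> W \<and> card S = r \<and> clique E S \<and> card (S \<inter> W) = t}"
  have "finite ?C"
    using assms(1,2) by (intro finite_subset[of ?C "Pow (B \<union> W)"]) auto
  moreover have "\<forall>S\<in>?C. card {v\<in>W. v \<in> S} = t"
  proof
    fix S assume "S \<in> ?C"
    moreover have "{v\<in>W. v \<in> S} = S \<inter> W"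
      by blast
    ultimately show "card {v\<in>W. v \<in> S} = t"
      by simp
  qed
  ultimately have "(\<Sum>v\<in>W. card {S\<in>?C. v \<in> S}) = t * card ?C"
    by (rule sum_multicount[OF assms(2)])
  then have "t * card ?C = (\<Sum>v\<in>W. card {S\<in>?C. v \<in> S})"
    by simp
  also have "\<dots> \<le> (\<Sum>v\<in>W. (card B choose (r - t)) * ((\<Delta> - 1) choose (t - 1)))"
  proof (rule sum_mono)
    fix v assume v: "v \<in> W"
    have "{S\<in>?C. v \<in> S} = {S. S \<subseteq> B \<union> W \<and> card S = r \<and> clique E S \<and> card (S \<inter> W) = t \<and> v \<in> S}"
      by blast
    then have "card {S\<in>?C. v \<in> S} \<le> (card B choose (r - t)) * (card (neighbours E v \<inter> W) choose (t - 1))"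
      using card_cliques_through_vertex_le[OF assms(1-3) v, of r E t] by simp
    also have "\<dots> \<le> (card B choose (r - t)) * ((\<Delta> - 1) choose (t - 1))"
      using assms(4)[OF v] by (intro mult_le_mono2 binomial_right_mono) simp
    finally show "card {S\<in>?C. v \<in> S} \<le> (card B choose (r - t)) * ((\<Delta> - 1) choose (t - 1))" .
  qed
  finally have "t * card ?C \<le> card W * (card B choose (r - t)) * ((\<Delta> - 1) choose (t - 1))"
    by (simp add: mult.assoc)
  then have "t * (\<Delta> * card ?C) \<le> card W * (card B choose (r - t)) * (\<Delta> * ((\<Delta> - 1) choose (t - 1)))"
    by (metis (no_types, lifting) mult.assoc mult.left_commute mult_le_mono2)
  also have "\<Delta> * ((\<Delta> - 1) choose (t - 1)) = t * (\<Delta> choose t)"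
    using binomial_absorption[of "t - 1" \<Delta>] assms(5) by simp
  finally show ?thesis
    using assms(5) by (simp add: mult.left_commute)
qed

lemma vandermonde_tail:
  "(\<Sum>t\<in>{1..r}. (s choose (r - t)) * (\<Delta> choose t)) + (s choose r) = (\<Delta> + s) choose r"
proof -
  have "{..r} = insert 0 {1..r}"
    by auto
  then show ?thesis
    using vandermonde[of \<Delta> s r] by (simp add: mult.commute)
qed

lemma sum_card_cliques_by_intersection_le:
  assumes "finite B" "finite W" "B \<inter> W = {}" "\<And>v. v \<in> W \<Longrightarrow> card (neighbours E v \<inter> W) < \<Delta>" "1 \<le> \<Delta>"
  shows "real (\<Sum>t\<in>{1..r}. card {S. S \<subseteq> B \<union> W \<and> card S = r \<and> clique E S \<and> card (S \<inter> W) = t})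
    \<le> real (card W) * (real ((\<Delta> + card B) choose r) - real (card B choose r)) / real \<Delta>"
proof -
  let ?C = "\<lambda>t. {S. S \<subseteq> B \<union> W \<and> card S = r \<and> clique E S \<and> card (S \<inter> W) = t}"
  let ?V = "\<Sum>t\<in>{1..r}. (card B choose (r - t)) * (\<Delta> choose t)"
  have "\<Delta> * card (?C t) \<le> card W * ((card B choose (r - t)) * (\<Delta> choose t))" if "t \<in> {1..r}" for t
    using card_cliques_by_intersection_le[OF assms(1-4), of t r] that unfolding mult.assoc by simp
  then have "\<Delta> * (\<Sum>t\<in>{1..r}. card (?C t)) \<le> card W * ?V"
    unfolding sum_distrib_left by (rule sum_mono)
  then have "real \<Delta> * real (\<Sum>t\<in>{1..r}. card (?C t)) \<le> real (card W) * real ?V"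
    unfolding of_nat_mult[symmetric] of_nat_le_iff .
  then have "real (\<Sum>t\<in>{1..r}. card (?C t)) \<le> real (card W) * real ?V / real \<Delta>"
    using assms(5) by (subst pos_le_divide_eq) (simp_all add: mult.commute)
  moreover have "real ?V + real (card B choose r) = real ((\<Delta> + card B) choose r)"
    by (simp only: of_nat_add[symmetric] vandermonde_tail)
  then have "real ?V = real ((\<Delta> + card B) choose r) - real (card B choose r)"
    by linarith
  ultimately show ?thesis
    by (simp only:)
qed

lemma cliques_subset_by_intersection:
  fixes V B U :: "'a set"
  assumes "finite V"
  defines "W \<equiv> V - B - U"
  shows "{S. S \<subseteq> V \<and> card S = r \<and> clique E S} \<subseteq> {S. S \<subseteq> B \<and> card S = r}
    \<union> {S. S \<subseteq> V \<and> card S = r \<and> clique E S \<and> S \<inter> U \<noteq> {}}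
    \<union> (\<Union>t\<in>{1..r}. {S. S \<subseteq> B \<union> W \<and> card S = r \<and> clique E S \<and> card (S \<inter> W) = t})"
    (is "_ \<subseteq> ?K \<union> ?M \<union> (\<Union>t\<in>{1..r}. ?C t)")
proof
  fix S assume "S \<in> {S. S \<subseteq> V \<and> card S = r \<and> clique E S}"
  then have S: "S \<subseteq> V" "card S = r" "clique E S"
    by auto
  consider "S \<inter> U \<noteq> {}" | "S \<inter> U = {}" "S \<inter> W = {}" | "S \<inter> U = {}" "S \<inter> W \<noteq> {}"
    by blast
  then show "S \<in> ?K \<union> ?M \<union> (\<Union>t\<in>{1..r}. ?C t)"
  proof cases
    case 1
    then have "S \<in> ?M"
      using S by blast
    then show ?thesis
      by blast
  next
    case 2
    then have "S \<in> ?K"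
      using S unfolding W_def by blast
    then show ?thesis
      by blast
  next
    case 3
    have "finite S"
      using S(1) assms(1) by (rule finite_subset)
    then have "card (S \<inter> W) \<in> {1..r}"
      using 3 card_mono[OF \<open>finite S\<close> Int_lower1, of W] S(2) by (simp add: Suc_le_eq card_gt_0_iff)
    moreover have "S \<subseteq> B \<union> W"
      using 3 S(1) unfolding W_def by blast
    then have "S \<in> ?C (card (S \<inter> W))"
      using S by simp
    ultimately show ?thesis
      by blast
  qed
qed

lemma count_Kr_le_partition:
  assumes "finite V" "B \<subseteq> V" "U \<subseteq> V - B" "\<And>z. z \<in> U \<Longrightarrow> card (neighbours E z \<inter> V) \<le> D"
    "\<And>v. v \<in> V - B - U \<Longrightarrow> card (neighbours E v \<inter> (V - B - U)) < \<Delta>" "1 \<le> \<Delta>"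
  shows "real (count_Kr r V E) \<le> real (card B choose r) + real (card U * (D choose (r - 1)))
      + real (card (V - B - U)) * (real ((\<Delta> + card B) choose r) - real (card B choose r)) / real \<Delta>"
proof -
  let ?K = "{S. S \<subseteq> B \<and> card S = r}"
  let ?M = "{S. S \<subseteq> V \<and> card S = r \<and> clique E S \<and> S \<inter> U \<noteq> {}}"
  let ?C = "\<lambda>t. {S. S \<subseteq> B \<union> (V - B - U) \<and> card S = r \<and> clique E S \<and> card (S \<inter> (V - B - U)) = t}"
  have "U \<subseteq> V"
    using assms(3) by blast
  have fin: "finite B" "finite (V - B - U)" "B \<inter> (V - B - U) = {}"
    using assms(1,2) finite_subset by auto
  have "?K \<union> ?M \<union> (\<Union>t\<in>{1..r}. ?C t) \<subseteq> Pow V"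
    using assms(2) by blast
  then have "finite (?K \<union> ?M \<union> (\<Union>t\<in>{1..r}. ?C t))"
    using assms(1) by (meson finite_Pow_iff finite_subset)
  then have "count_Kr r V E \<le> card (?K \<union> ?M \<union> (\<Union>t\<in>{1..r}. ?C t))"
    unfolding count_Kr_eq_card_cliques using cliques_subset_by_intersection[OF assms(1)]
    by (rule card_mono)
  also have "\<dots> \<le> card ?K + card ?M + card (\<Union>t\<in>{1..r}. ?C t)"
    by (meson add_le_mono card_Un_le le_refl order_trans)
  finally have "count_Kr r V E \<le> card ?K + card ?M + card (\<Union>t\<in>{1..r}. ?C t)" .
  moreover have "card ?K = card B choose r"
    using fin(1) by (rule n_subsets)
  moreover have "card ?M \<le> card U * (D choose (r - 1))"
    using assms(1) \<open>U \<subseteq> V\<close> assms(4) by (rule card_cliques_meeting_le)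
  moreover have "card (\<Union>t\<in>{1..r}. ?C t) \<le> (\<Sum>t\<in>{1..r}. card (?C t))"
    by (rule card_UN_le) simp
  ultimately have "count_Kr r V E \<le> (card B choose r) + card U * (D choose (r - 1)) + (\<Sum>t\<in>{1..r}. card (?C t))"
    by linarith
  then have "real (count_Kr r V E)
      \<le> real (card B choose r) + real (card U * (D choose (r - 1))) + real (\<Sum>t\<in>{1..r}. card (?C t))"
    by (simp only: of_nat_add[symmetric] of_nat_le_iff)
  then show ?thesis
    using sum_card_cliques_by_intersection_le[OF fin assms(5,6), of r] by linarith
qed

section \<open>Binomial and arithmetic estimates\<close>

lemma choose_shift_diff_mono:
  assumes "s \<le> m"
  shows "((\<Delta> + s) choose r) + (m choose r) \<le> ((\<Delta> + m) choose r) + (s choose r)"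
  using assms
proof (induction m rule: dec_induct)
  case base
  show ?case by simp
next
  case (step m)
  show ?case
  proof (cases r)
    case 0
    then show ?thesis by simp
  next
    case (Suc q)
    have "m choose q \<le> (\<Delta> + m) choose q"
      by (rule binomial_right_mono) simp
    then show ?thesis
      using step.IH unfolding Suc by simp
  qed
qed

lemma choose_shift_diff_strict_mono:
  assumes "2 \<le> r" "s choose r < (\<Delta> + s) choose r" "s < m"
  shows "((\<Delta> + s) choose r) + (m choose r) < ((\<Delta> + m) choose r) + (s choose r)"
proof -
  obtain q where q: "r = Suc q" "1 \<le> q"
    using assms(1) by (cases r) auto
  have "0 < \<Delta>"
    using assms(2) by (cases "\<Delta> = 0") auto
  have "(\<Delta> + s) choose r \<noteq> 0"
    using assms(2) by linarith
  then have "r \<le> \<Delta> + s"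
    by simp
  have "s choose q < (\<Delta> + s) choose q"
  proof (cases "q \<le> s")
    case False
    then have "s choose q = 0"
      by simp
    moreover have "0 < (\<Delta> + s) choose q"
      using \<open>r \<le> \<Delta> + s\<close> q(1) by simp
    ultimately show ?thesis
      by linarith
  next
    case True
    have "s choose q < Suc s choose q"
      using True q(2) by (cases q) auto
    also have "\<dots> \<le> (\<Delta> + s) choose q"
      using \<open>0 < \<Delta>\<close> by (intro binomial_right_mono) simp
    finally show ?thesis .
  qed
  then have "((\<Delta> + s) choose r) + (Suc s choose r) < ((\<Delta> + Suc s) choose r) + (s choose r)"
    unfolding q(1) by simp
  moreover have "((\<Delta> + Suc s) choose r) + (m choose r) \<le> ((\<Delta> + m) choose r) + (Suc s choose r)"
    using assms(3) by (intro choose_shift_diff_mono) simp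
  ultimately show ?thesis
    by linarith
qed

lemma affine_absorbs_constant:
  fixes K g G m n \<Delta> :: real
  assumes "0 \<le> K" "0 \<le> g" "g + 1 \<le> G" "0 \<le> m" "0 < \<Delta>" "K * \<Delta> + g * m + m \<le> n"
  shows "K + n * g / \<Delta> \<le> (n - m) * G / \<Delta>"
proof -
  have "0 \<le> K * \<Delta> + g * m"
    using assms(1,2,4,5) by simp
  then have "0 \<le> n - m"
    using assms(6) by linarith
  have "(n - m) * (g + 1) = n * g - g * m + n - m"
    by (simp add: algebra_simps)
  then have "K * \<Delta> + n * g \<le> (n - m) * (g + 1)"
    using assms(6) by linarith
  also have "\<dots> \<le> (n - m) * G"
    using assms(3) \<open>0 \<le> n - m\<close> by (rule mult_left_mono)
  finally have "(K * \<Delta> + n * g) / \<Delta> \<le> (n - m) * G / \<Delta>"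
    using assms(5) by (intro divide_right_mono) auto
  moreover have "(K * \<Delta> + n * g) / \<Delta> = K + n * g / \<Delta>"
    using assms(5) by (simp add: field_simps)
  ultimately show ?thesis
    by simp
qed

lemma mult_div_le_mult_ceiling:
  fixes G x \<Delta> :: real
  assumes "0 \<le> G" "0 < \<Delta>"
  shows "x * G / \<Delta> \<le> G * of_int \<lceil>x / \<Delta>\<rceil>"
proof -
  have "x * G / \<Delta> = G * (x / \<Delta>)"
    by simp
  also have "\<dots> \<le> G * of_int \<lceil>x / \<Delta>\<rceil>"
    using assms(1) by (intro mult_left_mono) auto
  finally show ?thesis .
qed

lemma clique_term_absorbs_lower_level:
  fixes K :: real
  assumes "2 \<le> r" "1 \<le> \<Delta>" "s + 1 < j" "s choose r < (\<Delta> + s) choose r" "0 \<le> K"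
    and large: "K * \<Delta> + real ((\<Delta> + s) choose r) * real (j - 1) + real (j - 1) \<le> real n"
  shows "K + real n * (real ((\<Delta> + s) choose r) - real (s choose r)) / \<Delta>
    \<le> (real ((\<Delta> + (j - 1)) choose r) - real ((j - 1) choose r)) * of_int \<lceil>(real n - real j + 1) / \<Delta>\<rceil>
      + real ((j - 1) choose r)"
proof -
  define g where "g = real ((\<Delta> + s) choose r) - real (s choose r)"
  define G where "G = real ((\<Delta> + (j - 1)) choose r) - real ((j - 1) choose r)"
  have "g + 1 \<le> G"
    using choose_shift_diff_strict_mono[OF assms(1,4), of "j - 1"] assms(3)
    unfolding g_def G_def by linarith
  have "0 \<le> g"
    using assms(4) unfolding g_def by simp
  have "0 < real \<Delta>"
    using assms(2) by simp
  have "g * real (j - 1) \<le> real ((\<Delta> + s) choose r) * real (j - 1)"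
    unfolding g_def by (simp add: mult_right_mono)
  then have "K * \<Delta> + g * real (j - 1) + real (j - 1) \<le> real n"
    using large by linarith
  then have "K + real n * g / \<Delta> \<le> (n - real (j - 1)) * G / \<Delta>"
    by (rule affine_absorbs_constant[OF assms(5) \<open>0 \<le> g\<close> \<open>g + 1 \<le> G\<close> of_nat_0_le_iff \<open>0 < real \<Delta>\<close>])
  also have "\<dots> \<le> G * of_int \<lceil>(n - real (j - 1)) / \<Delta>\<rceil>"
    using \<open>0 \<le> g\<close> \<open>g + 1 \<le> G\<close> \<open>0 < real \<Delta>\<close> by (intro mult_div_le_mult_ceiling) auto
  also have "real n - real (j - 1) = real n - real j + 1"
    using assms(3) by simp
  finally show ?thesis
    unfolding g_def G_def by simp
qed

lemma cor62_bound_ge_clique_term: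
  "i \<in> {1..k} \<Longrightarrow> (real ((d i + i - 1) choose r) - real ((i - 1) choose r))
      * of_int \<lceil>(real n - real i + 1) / real (d i)\<rceil> + real ((i - 1) choose r) \<le> cor62_bound k d r n"
  unfolding cor62_bound_def by (intro Max_ge) auto

lemma cor62_bound_ge_degree_term:
  "i \<in> {1..k} \<Longrightarrow> (real (d i) - 1) / (real r - real i + 1) * (real n - real i + 1) \<le> cor62_bound k d r n"
  unfolding cor62_bound_def by (intro Max_ge) auto


lemma cor62_bound_ge_level_term:
  assumes "j \<in> {1..k}" "0 < d j" "j \<le> n + 1"
  shows "real ((j - 1) choose r)
      + real (n - (j - 1)) * (real ((d j + (j - 1)) choose r) - real ((j - 1) choose r)) / real (d j)
    \<le> cor62_bound k d r n"
proof -
  have "(j - 1) choose r \<le> (d j + (j - 1)) choose r"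
    by (rule binomial_right_mono) simp
  then have "real (n - (j - 1)) * (real ((d j + (j - 1)) choose r) - real ((j - 1) choose r)) / real (d j)
      \<le> (real ((d j + (j - 1)) choose r) - real ((j - 1) choose r)) * of_int \<lceil>real (n - (j - 1)) / real (d j)\<rceil>"
    using assms(2) by (intro mult_div_le_mult_ceiling) auto
  moreover have eqs: "real (n - (j - 1)) = real n - real j + 1" "d j + (j - 1) = d j + j - 1"
    using assms(1,3) by auto
  ultimately show ?thesis
    using cor62_bound_ge_clique_term[OF assms(1), of d r n] unfolding eqs by linarith
qed

lemma cor62_bound_ge_lower_level:
  fixes K :: nat
  assumes d: "\<And>i. i \<in> {1..k} \<Longrightarrow> 2 \<le> d i" and r: "2 \<le> r" and j: "s + 1 < j" "j \<le> k"
    and "d j \<le> T" and large: "K * T + 2 ^ (T + k) * k + k + K * r \<le> n"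
  shows "real K + real n * (real ((d j + s) choose r) - real (s choose r)) / real (d j) \<le> cor62_bound k d r n"
proof (cases "s choose r < (d j + s) choose r")
  case True
  have j1: "j \<in> {1..k}" "1 \<le> d j"
    using j d[of j] by auto
  have "(d j + s) choose r \<le> 2 ^ (d j + s)"
    by (rule binomial_le_pow2)
  also have "\<dots> \<le> 2 ^ (T + k)"
    using \<open>d j \<le> T\<close> j by (intro power_increasing) auto
  finally have "((d j + s) choose r) * (j - 1) \<le> 2 ^ (T + k) * k"
    using j by (intro mult_le_mono) auto
  moreover have "K * d j \<le> K * T"
    using \<open>d j \<le> T\<close> by (rule mult_le_mono2)
  ultimately have "K * d j + ((d j + s) choose r) * (j - 1) + (j - 1) \<le> n"
    using large j by linarith
  then have "real K * real (d j) + real ((d j + s) choose r) * real (j - 1) + real (j - 1) \<le> real n"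
    by (simp only: of_nat_add[symmetric] of_nat_mult[symmetric] of_nat_le_iff)
  then have absorb: "real K + real n * (real ((d j + s) choose r) - real (s choose r)) / real (d j)
    \<le> (real ((d j + (j - 1)) choose r) - real ((j - 1) choose r)) * of_int \<lceil>(real n - real j + 1) / real (d j)\<rceil>
      + real ((j - 1) choose r)"
    by (rule clique_term_absorbs_lower_level[OF r j1(2) j(1) True of_nat_0_le_iff])
  have eq: "d j + (j - 1) = d j + j - 1"
    using j by auto
  show ?thesis
    using absorb cor62_bound_ge_clique_term[OF j1(1), of d r n] unfolding eq by linarith
next
  case False
  then have "(d j + s) choose r = s choose r"
    using binomial_right_mono[of s "d j + s" r] by simp
  have "K * r \<le> n"
    using large by linarith
  then have "real K \<le> real n / real r"
    using r by (simp add: pos_le_divide_eq flip: of_nat_mult)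
  also have "\<dots> \<le> (real (d 1) - 1) * (real n / real r)"
    using mult_right_mono[of 1 "real (d 1) - 1" "real n / real r"] d[of 1] j by simp
  also have "\<dots> = (real (d 1) - 1) / (real r - real 1 + 1) * (real n - real 1 + 1)"
    by simp
  also have "\<dots> \<le> cor62_bound k d r n"
    using j by (intro cor62_bound_ge_degree_term) simp
  finally show ?thesis
    using \<open>(d j + s) choose r = s choose r\<close> by simp
qed

lemma cor62_bound_ge_partition_bound:
  assumes d: "\<And>i. i \<in> {1..k} \<Longrightarrow> 2 \<le> d i" and r: "2 \<le> r" and j: "s < j" "j \<le> k"
    and "d j \<le> T" "u \<le> T" "w \<le> n - s" "j = s + 1 \<Longrightarrow> u = 0"
  defines "K \<equiv> 2 ^ k + T * (T choose (r - 1))"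
  assumes large: "K * T + 2 ^ (T + k) * k + k + K * r \<le> n"
  shows "real (s choose r) + real (u * (T choose (r - 1)))
      + real w * (real ((d j + s) choose r) - real (s choose r)) / real (d j) \<le> cor62_bound k d r n"
proof -
  have "0 < d j"
    using d[of j] j by simp
  have "0 \<le> real ((d j + s) choose r) - real (s choose r)"
    using binomial_right_mono[of s "d j + s" r] by simp
  then have scale: "real w * (real ((d j + s) choose r) - real (s choose r)) / real (d j)
      \<le> real m * (real ((d j + s) choose r) - real (s choose r)) / real (d j)" if "w \<le> m" for m
    using that by (intro divide_right_mono mult_right_mono) auto
  consider "j = s + 1" | "s + 1 < j"
    using j by linarith
  then show ?thesis
  proof cases
    case 1
    have "j \<le> n + 1"
      using j large by linarith
    then show ?thesis
      using cor62_bound_ge_level_term[of j k d n r] scale[OF \<open>w \<le> n - s\<close>] \<open>0 < d j\<close> 1 j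
        \<open>j = s + 1 \<Longrightarrow> u = 0\<close> by simp
  next
    case 2
    have "s choose r \<le> 2 ^ s"
      by (rule binomial_le_pow2)
    also have "\<dots> \<le> 2 ^ k"
      using j by (intro power_increasing) auto
    finally have "(s choose r) + u * (T choose (r - 1)) \<le> K"
      unfolding K_def using \<open>u \<le> T\<close> by (intro add_mono mult_le_mono1)
    then have "real (s choose r) + real (u * (T choose (r - 1))) \<le> real K"
      by (simp only: of_nat_add[symmetric] of_nat_le_iff)
    moreover have "w \<le> n"
      using \<open>w \<le> n - s\<close> by simp
    ultimately show ?thesis
      using cor62_bound_ge_lower_level[where k = k and d = d, OF d r 2 j(2) \<open>d j \<le> T\<close> large] scale[of n]
      by linarith
  qed
qed

lemma count_Kr_star_forest_free_le:
  assumes d: "\<And>i. i \<in> {1..k} \<Longrightarrow> 2 \<le> d i" and r: "2 \<le> r"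
    and G: "simple_graph V E" "finite V"
    and free: "\<not> subgraph_copy (star_forest_V k d) (star_forest_E k d) V E"
  defines "T \<equiv> \<Sum>i\<in>{1..k}. d i + 1"
  defines "K \<equiv> 2 ^ k + T * (T choose (r - 1))"
  assumes large: "K * T + 2 ^ (T + k) * k + k + K * r \<le> card V"
  shows "real (count_Kr r V E) \<le> cor62_bound k d r (card V)"
proof -
  obtain B j U where BV: "B \<subseteq> V" and j: "card B < j" "j \<le> k"
    and low: "\<forall>v\<in>V - B. card (neighbours E v) < T" and UV: "U \<subseteq> V - B" and "card U \<le> T"
    and first: "j = card B + 1 \<Longrightarrow> U = {}"
    and sparse: "\<forall>v\<in>V - B - U. card (neighbours E v \<inter> (V - B - U)) < d j"
    using star_forest_free_decomposition[OF G free, folded T_def] by metis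
  have "d j \<le> T"
    unfolding T_def using member_le_sum[of j "{1..k}" "\<lambda>i. d i + 1"] j by simp
  have "card (neighbours E z \<inter> V) \<le> T" if "z \<in> U" for z
  proof -
    have "neighbours E z \<inter> V = neighbours E z"
      using neighbours_subset[OF G(1), of z] by blast
    moreover have "card (neighbours E z) < T"
      using low UV that by blast
    ultimately show ?thesis
      by simp
  qed
  moreover have "\<And>v. v \<in> V - B - U \<Longrightarrow> card (neighbours E v \<inter> (V - B - U)) < d j" "1 \<le> d j"
    using sparse d[of j] j by auto
  ultimately have "real (count_Kr r V E) \<le> real (card B choose r) + real (card U * (T choose (r - 1)))
      + real (card (V - B - U)) * (real ((d j + card B) choose r) - real (card B choose r)) / real (d j)"
    by (rule count_Kr_le_partition[OF G(2) BV UV])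
  also have "\<dots> \<le> cor62_bound k d r (card V)"
  proof (rule cor62_bound_ge_partition_bound[where k = k and d = d, OF d r j \<open>d j \<le> T\<close> \<open>card U \<le> T\<close>])
    have "finite B"
      using BV G(2) by (rule finite_subset)
    have "card (V - B - U) \<le> card (V - B)"
      using G(2) by (intro card_mono) auto
    also have "card (V - B) = card V - card B"
      using \<open>finite B\<close> BV by (rule card_Diff_subset)
    finally show "card (V - B - U) \<le> card V - card B" .
    show "j = card B + 1 \<Longrightarrow> card U = 0"
      using first by simp
    show "(2 ^ k + T * (T choose (r - 1))) * T + 2 ^ (T + k) * k + k + (2 ^ k + T * (T choose (r - 1))) * r
        \<le> card V"
      using large unfolding K_def .
  qed
  finally show ?thesis .
qed

lemma ex_Kr_le:
  fixes b :: real
  assumes "EF \<noteq> {}"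
    and "\<And>E. simple_graph {0..<n} E \<Longrightarrow> \<not> subgraph_copy VF EF {0..<n} E \<Longrightarrow> real (count_Kr r {0..<n} E) \<le> b"
  shows "real (ex_Kr n r VF EF) \<le> b"
proof -
  let ?S = "{count_Kr r {0..<n} E | E. simple_graph {0..<n::nat} E \<and> \<not> subgraph_copy VF EF {0..<n} E}"
  have "?S \<subseteq> (\<lambda>E. count_Kr r {0..<n} E) ` Pow (Pow {0..<n})"
    unfolding simple_graph_def by auto
  then have "finite ?S"
    by (rule finite_subset) simp
  have "\<not> subgraph_copy VF EF {0..<n} {}"
    using assms(1) unfolding subgraph_copy_def by auto
  then have "count_Kr r {0..<n} {} \<in> ?S"
    unfolding simple_graph_def by auto
  then have "ex_Kr n r VF EF \<in> ?S"
    unfolding ex_Kr_def using \<open>finite ?S\<close> by (intro Max_in) auto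
  then show ?thesis
    using assms(2) by auto
qed

lemma choose_le_first_clique_term:
  assumes "r \<le> 1" "0 < \<Delta>"
  shows "real (n choose r)
    \<le> (real (\<Delta> choose r) - real (0 choose r)) * of_int \<lceil>real n / real \<Delta>\<rceil> + real (0 choose r)"
proof (cases r)
  case 0
  then show ?thesis by simp
next
  case (Suc q)
  then have "r = 1"
    using assms(1) by simp
  have "real n * real \<Delta> / real \<Delta> \<le> real \<Delta> * of_int \<lceil>real n / real \<Delta>\<rceil>"
    using assms(2) by (intro mult_div_le_mult_ceiling) auto
  then show ?thesis
    using \<open>r = 1\<close> assms(2) by simp
qed

theorem corollary6p2:
  fixes k r :: nat and d :: "nat \<Rightarrow> nat"
  assumes "k \<ge> 2"
    and "\<And>i j. 1 \<le> i \<Longrightarrow> i \<le> j \<Longrightarrow> j \<le> k \<Longrightarrow> d j \<le> d i"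
    and "d k \<ge> 2"
    and "r \<le> d 1 + k - 2"
  shows "\<exists>N. \<forall>n\<ge>N. real (ex_Kr n r (star_forest_V k d) (star_forest_E k d)) \<le> cor62_bound k d r n"
proof -
  have d: "2 \<le> d i" if "i \<in> {1..k}" for i
    using assms(2)[of i k] assms(3) that by auto
  define T where "T = (\<Sum>i\<in>{1..k}. d i + 1)"
  define K where "K = 2 ^ k + T * (T choose (r - 1))"
  have "{(1, 0), (1, 1)} \<in> star_forest_E k d"
    unfolding star_forest_E_def using assms(1) d[of 1] by force
  then have F: "star_forest_E k d \<noteq> {}"
    by blast
  have "real (ex_Kr n r (star_forest_V k d) (star_forest_E k d)) \<le> cor62_bound k d r n"
    if "K * T + 2 ^ (T + k) * k + k + K * r \<le> n" for n
  proof (rule ex_Kr_le[OF F])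
    fix E assume "simple_graph {0..<n} E" "\<not> subgraph_copy (star_forest_V k d) (star_forest_E k d) {0..<n} E"
    show "real (count_Kr r {0..<n} E) \<le> cor62_bound k d r n"
    proof (cases "2 \<le> r")
      case True
      then show ?thesis
        using count_Kr_star_forest_free_le[OF d True \<open>simple_graph {0..<n} E\<close> finite_atLeastLessThan]
          \<open>\<not> subgraph_copy _ _ _ E\<close> that unfolding T_def K_def by simp
    next
      case False
      have "real (count_Kr r {0..<n} E) \<le> real (n choose r)"
        using count_Kr_le_choose[of "{0..<n}" r E] by simp
      also have "\<dots> \<le> cor62_bound k d r n"
        using choose_le_first_clique_term[of r "d 1" n] cor62_bound_ge_clique_term[of 1 k d r n]
          False d[of 1] assms(1) by simp
      finally show ?thesis .
    qed
  qed
  then show ?thesis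
    by blast
qed

end
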